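(* Let $E_n$ ($n\geq1$) and $E_0$ be measurable subsets of $\mathbb{R}^d$ such that $|E_n\,\Delta\,E_0|\to 0$ and $d_H(\partial E_n,\partial E_0)\to 0$. Then also $d_H(E_n,E_0)\to0$.
   Context: $\partial E$ denotes the topological boundary of $E$; $|\cdot|$ is Lebesgue measure. $d_H(E,F)=\max\{\sup_{x\in E}\operatorname{dist}(x,F),\sup_{y\in F}\operatorname{dist}(y,E)\}$ is the Hausdorff distance. *)

theory Defs
  imports "HOL-Analysis.Analysis"
begin

text \<open>Distance from a point to a set, with the convention dist(x, {}) = +infinity.\<close>
definition setdist_pt :: "'a::metric_space \<Rightarrow> 'a set \<Rightarrow> ennreal" where
  "setdist_pt x F = (INF y\<in>F. ennreal (dist x y))"

text \<open>Hausdorff distance (possibly infinite), with sup over the empty set = 0.\<close>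
definition hausdorff_dist :: "'a::metric_space set \<Rightarrow> 'a set \<Rightarrow> ennreal" where
  "hausdorff_dist E F = max (SUP x\<in>E. setdist_pt x F) (SUP y\<in>F. setdist_pt y E)"

end

theory Submission
  imports Defs
begin

text \<open>
  Let \<open>x \<in> E\<^sub>n\<close> and \<open>r > 0\<close>. If the ball \<open>B(x, r)\<close> lies inside \<open>E\<^sub>n\<close> and misses \<open>E\<^sub>0\<close>, it lies
  in \<open>E\<^sub>n - E\<^sub>0\<close>, which is impossible once \<open>|E\<^sub>n \<Delta> E\<^sub>0| < |B(x, r)|\<close>, a bound independent of \<open>x\<close>.
  Otherwise either the ball meets \<open>E\<^sub>0\<close>, or, being connected, it meets \<open>\<partial>E\<^sub>n\<close>; in the latter
  case, once \<open>d\<^sub>H(\<partial>E\<^sub>n, \<partial>E\<^sub>0) < r\<close>, there is a point of \<open>\<partial>E\<^sub>0 \<subseteq> closure E\<^sub>0\<close> within \<open>2r\<close>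
  of \<open>x\<close>. The same argument with the roles of \<open>E\<^sub>n\<close> and \<open>E\<^sub>0\<close> exchanged gives
  \<open>d\<^sub>H(E\<^sub>n, E\<^sub>0) \<le> 2r\<close> for all large \<open>n\<close>.
\<close>

lemma setdist_pt_le_hausdorff_dist:
  "x \<in> A \<Longrightarrow> setdist_pt x B \<le> hausdorff_dist A B"
  unfolding hausdorff_dist_def by (meson SUP_upper max.cobounded1 order_trans)

lemma hausdorff_dist_commute: "hausdorff_dist A B = hausdorff_dist B A"
  unfolding hausdorff_dist_def by (simp add: max.commute)

lemma hausdorff_dist_less_ennrealD:
  assumes "hausdorff_dist A B < ennreal e" and "x \<in> A"
  shows "\<exists>y\<in>B. dist x y < e"
proof -
  have "(INF y\<in>B. ennreal (dist x y)) < ennreal e"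
    using setdist_pt_le_hausdorff_dist[OF assms(2), of B] assms(1)
    unfolding setdist_pt_def by simp
  then obtain y where "y \<in> B" "ennreal (dist x y) < ennreal e"
    by (auto simp: INF_less_iff)
  then show ?thesis by (auto simp: ennreal_less_iff)
qed

lemma hausdorff_dist_le_ennrealI:
  assumes "\<forall>x\<in>A. \<exists>y\<in>B. dist x y \<le> d" and "\<forall>y\<in>B. \<exists>x\<in>A. dist y x \<le> d"
  shows "hausdorff_dist A B \<le> ennreal d"
proof -
  have near: "setdist_pt x T \<le> ennreal d" if "\<exists>y\<in>T. dist x y \<le> d" for x T
    using that unfolding setdist_pt_def by (meson INF_lower2 ennreal_leI)
  show ?thesis
    unfolding hausdorff_dist_def
    by (intro max.boundedI SUP_least near) (use assms in auto)
qed

lemma exists_frontier_point_in_ball: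
  fixes A :: "'a::real_normed_vector set"
  assumes "x \<in> A" and "0 < r" and "\<not> ball x r \<subseteq> A"
  shows "\<exists>z\<in>frontier A. dist x z < r"
proof -
  have "x \<in> ball x r \<inter> A" using assms by simp
  then have "ball x r \<inter> frontier A \<noteq> {}"
    using connected_Int_frontier[OF connected_ball, of x r A] assms(3) by blast
  then show ?thesis by auto
qed

lemma exists_near_point_of_near_frontiers:
  fixes A B :: "'a::euclidean_space set"
  assumes "0 < r" and "A - B \<in> sets lebesgue"
    and small_diff: "emeasure lebesgue (A - B) < emeasure lebesgue (ball (0::'a) r)"
    and near_frontiers: "hausdorff_dist (frontier A) (frontier B) < ennreal r"
    and "x \<in> A"
  shows "\<exists>y\<in>B. dist x y < 2 * r"
proof (cases "ball x r \<subseteq> A")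
  case True
  show ?thesis
  proof (rule ccontr)
    assume "\<not> ?thesis"
    with \<open>0 < r\<close> have "ball x r \<inter> B = {}" by force
    with True have "ball x r \<subseteq> A - B" by blast
    then have "emeasure lebesgue (ball x r) \<le> emeasure lebesgue (A - B)"
      using \<open>A - B \<in> sets lebesgue\<close> by (rule emeasure_mono)
    moreover have "emeasure lebesgue (ball x r) = emeasure lebesgue (ball (0::'a) r)"
      using \<open>0 < r\<close> by (simp add: emeasure_ball)
    ultimately show False using small_diff by simp
  qed
next
  case False
  then obtain z where z: "z \<in> frontier A" "dist x z < r"
    using exists_frontier_point_in_ball \<open>x \<in> A\<close> \<open>0 < r\<close> by blast
  then obtain w where w: "w \<in> frontier B" "dist z w < r"
    using hausdorff_dist_less_ennrealD[OF near_frontiers] by blast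
  have "dist x w < 2 * r"
    using z w dist_triangle[of x w z] by linarith
  moreover have "w \<in> closure B"
    using w by (simp add: frontier_def)
  ultimately obtain y where y: "y \<in> B" "dist y w < 2 * r - dist x w"
    by (metis closure_approachable diff_gt_0_iff_gt)
  have "dist x y < 2 * r"
    using y(2) dist_triangle[of x y w] dist_commute[of y w] by linarith
  with y(1) show ?thesis by blast
qed

lemma hausdorff_dist_le_of_small_symdiff_and_near_frontiers:
  fixes A B :: "'a::euclidean_space set"
  assumes "0 < r" and "A \<in> sets lebesgue" and "B \<in> sets lebesgue"
    and small_symdiff: "emeasure lebesgue ((A - B) \<union> (B - A)) < emeasure lebesgue (ball (0::'a) r)"
    and near_frontiers: "hausdorff_dist (frontier A) (frontier B) < ennreal r"
  shows "hausdorff_dist A B \<le> ennreal (2 * r)"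
proof (rule hausdorff_dist_le_ennrealI)
  have "emeasure lebesgue (A - B) < emeasure lebesgue (ball (0::'a) r)"
    by (rule le_less_trans[OF emeasure_mono small_symdiff]) (use assms in auto)
  with assms show "\<forall>x\<in>A. \<exists>y\<in>B. dist x y \<le> 2 * r"
    by (meson exists_near_point_of_near_frontiers sets.Diff less_imp_le)
  have "emeasure lebesgue (B - A) < emeasure lebesgue (ball (0::'a) r)"
    by (rule le_less_trans[OF emeasure_mono small_symdiff]) (use assms in auto)
  with assms show "\<forall>y\<in>B. \<exists>x\<in>A. dist y x \<le> 2 * r"
    by (metis exists_near_point_of_near_frontiers hausdorff_dist_commute sets.Diff less_imp_le)
qed

lemma tendsto_ennreal_zeroI:
  fixes f :: "'b \<Rightarrow> ennreal"
  assumes "\<And>r. 0 < r \<Longrightarrow> eventually (\<lambda>n. f n \<le> ennreal r) F"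
  shows "(f \<longlongrightarrow> 0) F"
proof (rule order_tendstoI)
  fix e :: ennreal
  assume "0 < e"
  then obtain r where "0 < r" "ennreal r < e"
    by (metis dense ennreal_enn2real ennreal_less_zero_iff enn2real_positive_iff
        less_trans top.not_eq_extremum)
  then show "eventually (\<lambda>n. f n < e) F"
    using assms[of r] by (auto elim: eventually_mono)
qed simp

theorem proposition2p5:
  fixes E :: "nat \<Rightarrow> 'a::euclidean_space set" and E0 :: "'a set"
  assumes meas: "\<And>n. E n \<in> sets lebesgue" and meas0: "E0 \<in> sets lebesgue"
    and symdiff: "(\<lambda>n. emeasure lebesgue ((E n - E0) \<union> (E0 - E n))) \<longlonglongrightarrow> 0"
    and bdry: "(\<lambda>n. hausdorff_dist (frontier (E n)) (frontier E0)) \<longlonglongrightarrow> 0"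
  shows "(\<lambda>n. hausdorff_dist (E n) E0) \<longlonglongrightarrow> 0"
proof (rule tendsto_ennreal_zeroI)
  fix r :: real
  assume "0 < r"
  define s where "s = r / 2"
  have "0 < s" using \<open>0 < r\<close> by (simp add: s_def)
  then have "0 < emeasure lebesgue (ball (0::'a) s)"
    by (simp add: emeasure_ball)
  then have "eventually (\<lambda>n. emeasure lebesgue ((E n - E0) \<union> (E0 - E n))
      < emeasure lebesgue (ball (0::'a) s)) sequentially"
    by (rule order_tendstoD(2)[OF symdiff])
  moreover have "eventually (\<lambda>n. hausdorff_dist (frontier (E n)) (frontier E0) < ennreal s) sequentially"
    using bdry \<open>0 < s\<close> by (intro order_tendstoD(2)) auto
  ultimately show "eventually (\<lambda>n. hausdorff_dist (E n) E0 \<le> ennreal r) sequentially"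
  proof eventually_elim
    case (elim n)
    then have "hausdorff_dist (E n) E0 \<le> ennreal (2 * s)"
      using hausdorff_dist_le_of_small_symdiff_and_near_frontiers \<open>0 < s\<close> meas meas0 by blast
    then show ?case by (simp add: s_def)
  qed
qed

end
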